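(* Fix $n\ge1$, pairwise distinct constants $\lambda_1,\dots,\lambda_n$ and arbitrary constants $\alpha_1,\dots,\alpha_n$. Consider the system \[ y_{j,xx}=\frac{y_{j,x}^2-\alpha_j^2}{2y_j}+2(u-\lambda_j)y_j,\qquad (\mathrm{A}) \] \[ y_{j,t}=2u_xy_j-2(u+2\lambda_j)y_{j,x},\qquad (\mathrm{B}) \] $j=1,\dots,n$, where $u:=\frac{x}{6t}+\frac{1}{3t}(y_1+\dots+y_n)$ ($t\neq0$). Regard (A) as expressing $y_{j,xx}$ as a function of $x,t,y_1,y_{1,x},\dots,y_n,y_{n,x}$, and (B) as expressing $y_{j,t}$ in these variables, the $t$-derivative of $y_{j,x}$ being obtained by differentiating (B) with respect to $x$ and eliminating second $x$-derivatives by (A). Then the system is consistent: $(y_{j,xx})_t=(y_{j,t})_{xx}$ holds identically in $x,t,y_k,y_{k,x}$ when both sides are computed by virtue of (A), (B). Moreover, by virtue of (A), (B), the function $u$ satisfies the KdV equation $u_t=u_{xxx}-6uu_x$.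
   Context: All $y_j$ are assumed nonzero where the equations are considered. Subscripts $x,t$ denote partial derivatives. *)

theory Defs
  imports "HOL-Analysis.Analysis"
begin

text \<open>Jet space coordinates: a point is (x, t, y, p) where y k stands for y_k and
  p k stands for y_{k,x} (indices k = 1..n). Functions on the jet space are real-valued.\<close>

type_synonym jet = "real \<times> real \<times> (nat \<Rightarrow> real) \<times> (nat \<Rightarrow> real)"

definition pd_x :: "(jet \<Rightarrow> real) \<Rightarrow> jet \<Rightarrow> real" where
  "pd_x F J = (case J of (x, t, y, p) \<Rightarrow> deriv (\<lambda>s. F (s, t, y, p)) x)"

definition pd_t :: "(jet \<Rightarrow> real) \<Rightarrow> jet \<Rightarrow> real" where
  "pd_t F J = (case J of (x, t, y, p) \<Rightarrow> deriv (\<lambda>s. F (x, s, y, p)) t)"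

definition pd_y :: "nat \<Rightarrow> (jet \<Rightarrow> real) \<Rightarrow> jet \<Rightarrow> real" where
  "pd_y k F J = (case J of (x, t, y, p) \<Rightarrow> deriv (\<lambda>s. F (x, t, y(k := s), p)) (y k))"

definition pd_p :: "nat \<Rightarrow> (jet \<Rightarrow> real) \<Rightarrow> jet \<Rightarrow> real" where
  "pd_p k F J = (case J of (x, t, y, p) \<Rightarrow> deriv (\<lambda>s. F (x, t, y, p(k := s))) (p k))"

definition u_fun :: "nat \<Rightarrow> jet \<Rightarrow> real" where
  "u_fun n J = (case J of (x, t, y, p) \<Rightarrow> x / (6 * t) + (\<Sum>k = 1..n. y k) / (3 * t))"

definition ux_fun :: "nat \<Rightarrow> jet \<Rightarrow> real" where
  "ux_fun n J = (case J of (x, t, y, p) \<Rightarrow> 1 / (6 * t) + (\<Sum>k = 1..n. p k) / (3 * t))"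

definition rhsA :: "nat \<Rightarrow> (nat \<Rightarrow> real) \<Rightarrow> (nat \<Rightarrow> real) \<Rightarrow> nat \<Rightarrow> jet \<Rightarrow> real" where
  "rhsA n lam alpha j J = (case J of (x, t, y, p) \<Rightarrow>
      ((p j)^2 - (alpha j)^2) / (2 * y j) + 2 * (u_fun n J - lam j) * y j)"

definition rhsB :: "nat \<Rightarrow> (nat \<Rightarrow> real) \<Rightarrow> nat \<Rightarrow> jet \<Rightarrow> real" where
  "rhsB n lam j J = (case J of (x, t, y, p) \<Rightarrow>
      2 * ux_fun n J * y j - 2 * (u_fun n J + 2 * lam j) * p j)"

definition Dx :: "nat \<Rightarrow> (nat \<Rightarrow> real) \<Rightarrow> (nat \<Rightarrow> real) \<Rightarrow> (jet \<Rightarrow> real) \<Rightarrow> jet \<Rightarrow> real" where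
  "Dx n lam alpha F J = (case J of (x, t, y, p) \<Rightarrow>
      pd_x F J + (\<Sum>k = 1..n. p k * pd_y k F J + rhsA n lam alpha k J * pd_p k F J))"

definition Dt :: "nat \<Rightarrow> (nat \<Rightarrow> real) \<Rightarrow> (nat \<Rightarrow> real) \<Rightarrow> (jet \<Rightarrow> real) \<Rightarrow> jet \<Rightarrow> real" where
  "Dt n lam alpha F J =
      pd_t F J + (\<Sum>k = 1..n. rhsB n lam k J * pd_y k F J
                     + Dx n lam alpha (rhsB n lam k) J * pd_p k F J)"

end

theory Submission
  imports Defs
begin

(*
  Total derivatives act on functions of the jet variables as vector fields, i.e. as
  derivations, so they can be evaluated with the sum, product and quotient rules; an
  iterated total derivative only needs the inner one in closed form on the set
  t \<noteq> 0, y_k \<noteq> 0, which is open in every coordinate direction.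

  By (A), D_x y_{k,x} = A_k and D_x A_k = 4 (u - \<lambda>_k) y_{k,x} + 2 y_k u_x, while (B) reads
  y_{k,t} = D_x A_k - 6 u y_{k,x}. Summing over k, and noting that the explicit
  t-dependence of u contributes -u/t = -6 u / (6 t), gives u_t = u_xxx - 6 u u_x.
  After substituting this for u_t, the compatibility of (A) and (B) is a rational
  identity in y_j, y_{j,x}, u, u_x.
*)

datatype jet_axis = DX | DT | DY nat | DP nat

fun jet_coord :: "jet_axis \<Rightarrow> jet \<Rightarrow> real" where
  "jet_coord DX (x, t, y, p) = x"
| "jet_coord DT (x, t, y, p) = t"
| "jet_coord (DY k) (x, t, y, p) = y k"
| "jet_coord (DP k) (x, t, y, p) = p k"

fun jet_update :: "jet_axis \<Rightarrow> jet \<Rightarrow> real \<Rightarrow> jet" where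
  "jet_update DX (x, t, y, p) s = (s, t, y, p)"
| "jet_update DT (x, t, y, p) s = (x, s, y, p)"
| "jet_update (DY k) (x, t, y, p) s = (x, t, y(k := s), p)"
| "jet_update (DP k) (x, t, y, p) s = (x, t, y, p(k := s))"

lemma jet_update_coord [simp]: "jet_update d J (jet_coord d J) = J"
  by (cases J; cases d) auto

definition partial :: "jet_axis \<Rightarrow> (jet \<Rightarrow> real) \<Rightarrow> jet \<Rightarrow> real" where
  "partial d F J = deriv (\<lambda>s. F (jet_update d J s)) (jet_coord d J)"

definition partial_differentiable :: "jet_axis \<Rightarrow> (jet \<Rightarrow> real) \<Rightarrow> jet \<Rightarrow> bool" where
  "partial_differentiable d F J \<longleftrightarrow>
     (\<lambda>s. F (jet_update d J s)) differentiable (at (jet_coord d J))"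

definition coordwise_differentiable :: "(jet \<Rightarrow> real) \<Rightarrow> jet \<Rightarrow> bool" where
  "coordwise_differentiable F J \<longleftrightarrow> (\<forall>d. partial_differentiable d F J)"

lemma partial_differentiableD:
  "partial_differentiable d F J \<Longrightarrow>
     ((\<lambda>s. F (jet_update d J s)) has_real_derivative partial d F J) (at (jet_coord d J))"
  unfolding partial_differentiable_def partial_def using DERIV_deriv_iff_real_differentiable by blast

lemma partialI:
  assumes "((\<lambda>s. F (jet_update d J s)) has_real_derivative D) (at (jet_coord d J))"
  shows "partial d F J = D" and "partial_differentiable d F J"
  using assms DERIV_imp_deriv real_differentiable_def
  unfolding partial_def partial_differentiable_def by blast+

lemma partial_const:
  shows "partial d (\<lambda>J. k) J = 0" and "partial_differentiable d (\<lambda>J. k) J"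
  by (rule partialI, rule DERIV_const)+

lemma partial_add:
  assumes "partial_differentiable d F J" "partial_differentiable d G J"
  shows "partial d (\<lambda>J. F J + G J) J = partial d F J + partial d G J"
    and "partial_differentiable d (\<lambda>J. F J + G J) J"
  by (rule partialI, rule DERIV_add[OF assms[THEN partial_differentiableD]])+

lemma partial_diff:
  assumes "partial_differentiable d F J" "partial_differentiable d G J"
  shows "partial d (\<lambda>J. F J - G J) J = partial d F J - partial d G J"
    and "partial_differentiable d (\<lambda>J. F J - G J) J"
  by (rule partialI, rule DERIV_diff[OF assms[THEN partial_differentiableD]])+

lemma partial_mult:
  assumes "partial_differentiable d F J" "partial_differentiable d G J"
  shows "partial d (\<lambda>J. F J * G J) J = partial d F J * G J + F J * partial d G J"
    and "partial_differentiable d (\<lambda>J. F J * G J) J"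
  using partialI[OF DERIV_mult'[OF assms[THEN partial_differentiableD]]] by (simp_all add: algebra_simps)

lemma partial_divide:
  assumes "partial_differentiable d F J" "partial_differentiable d G J" "G J \<noteq> 0"
  shows "partial d (\<lambda>J. F J / G J) J = (partial d F J * G J - F J * partial d G J) / (G J)\<^sup>2"
    and "partial_differentiable d (\<lambda>J. F J / G J) J"
  using partialI[OF DERIV_divide[OF assms(1,2)[THEN partial_differentiableD]]] assms(3)
  by (simp_all add: power2_eq_square)

lemma partial_sum:
  assumes "finite K" "\<forall>i\<in>K. partial_differentiable d (F i) J"
  shows "partial d (\<lambda>J. \<Sum>i\<in>K. F i J) J = (\<Sum>i\<in>K. partial d (F i) J)"
    and "partial_differentiable d (\<lambda>J. \<Sum>i\<in>K. F i J) J"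
proof -
  have "((\<lambda>s. \<Sum>i\<in>K. F i (jet_update d J s)) has_real_derivative (\<Sum>i\<in>K. partial d (F i) J))
          (at (jet_coord d J))"
    using assms(2) by (intro DERIV_sum) (auto intro: partial_differentiableD)
  then show "partial d (\<lambda>J. \<Sum>i\<in>K. F i J) J = (\<Sum>i\<in>K. partial d (F i) J)"
    and "partial_differentiable d (\<lambda>J. \<Sum>i\<in>K. F i J) J"
    by (rule partialI)+
qed

lemma partial_projection:
  assumes "\<And>s. F (jet_update d J s) = (if b then s else F J)"
  shows "partial d F J = of_bool b" and "partial_differentiable d F J"
proof -
  have "((\<lambda>s. F (jet_update d J s)) has_real_derivative of_bool b) (at (jet_coord d J))"
    unfolding assms by (cases b) (auto intro!: derivative_eq_intros)
  then show "partial d F J = of_bool b" and "partial_differentiable d F J"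
    by (rule partialI)+
qed

lemma coordwise_differentiable_simps [simp]:
  "coordwise_differentiable (\<lambda>J. k) J"
  "coordwise_differentiable F J \<Longrightarrow> coordwise_differentiable G J \<Longrightarrow>
     coordwise_differentiable (\<lambda>J. F J + G J) J"
  "coordwise_differentiable F J \<Longrightarrow> coordwise_differentiable G J \<Longrightarrow>
     coordwise_differentiable (\<lambda>J. F J - G J) J"
  "coordwise_differentiable F J \<Longrightarrow> coordwise_differentiable G J \<Longrightarrow>
     coordwise_differentiable (\<lambda>J. F J * G J) J"
  "coordwise_differentiable F J \<Longrightarrow> coordwise_differentiable G J \<Longrightarrow> G J \<noteq> 0 \<Longrightarrow>
     coordwise_differentiable (\<lambda>J. F J / G J) J"
  "finite K \<Longrightarrow> \<forall>i\<in>K. coordwise_differentiable (Fs i) J \<Longrightarrow>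
     coordwise_differentiable (\<lambda>J. \<Sum>i\<in>K. Fs i J) J"
  unfolding coordwise_differentiable_def
  by (simp_all add: partial_const partial_add partial_diff partial_mult partial_divide partial_sum)

fun jet_x :: "jet \<Rightarrow> real" where "jet_x (x, t, y, p) = x"
fun jet_t :: "jet \<Rightarrow> real" where "jet_t (x, t, y, p) = t"
fun jet_y :: "nat \<Rightarrow> jet \<Rightarrow> real" where "jet_y k (x, t, y, p) = y k"
fun jet_p :: "nat \<Rightarrow> jet \<Rightarrow> real" where "jet_p k (x, t, y, p) = p k"

lemma jet_projections_update:
  "jet_x (jet_update d J s) = (if d = DX then s else jet_x J)"
  "jet_t (jet_update d J s) = (if d = DT then s else jet_t J)"
  "jet_y k (jet_update d J s) = (if d = DY k then s else jet_y k J)"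
  "jet_p k (jet_update d J s) = (if d = DP k then s else jet_p k J)"
  by (cases J; cases d; simp)+

lemma partial_jet_projections [simp]:
  "partial d jet_x J = of_bool (d = DX)"
  "partial d jet_t J = of_bool (d = DT)"
  "partial d (jet_y k) J = of_bool (d = DY k)"
  "partial d (jet_p k) J = of_bool (d = DP k)"
  by (rule partial_projection(1), rule jet_projections_update)+

lemma coordwise_differentiable_jet_projections [simp]:
  "coordwise_differentiable jet_x J"
  "coordwise_differentiable jet_t J"
  "coordwise_differentiable (jet_y k) J"
  "coordwise_differentiable (jet_p k) J"
  unfolding coordwise_differentiable_def
  by (blast intro: partial_projection(2) jet_projections_update)+

definition vector_field ::
  "nat \<Rightarrow> real \<Rightarrow> real \<Rightarrow> (nat \<Rightarrow> real) \<Rightarrow> (nat \<Rightarrow> real) \<Rightarrow> (jet \<Rightarrow> real) \<Rightarrow> jet \<Rightarrow> real"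
where
  "vector_field n a b c e F J = a * partial DX F J + b * partial DT F J
     + (\<Sum>k = 1..n. c k * partial (DY k) F J + e k * partial (DP k) F J)"

lemma vector_field_linear:
  assumes "\<And>d. partial d H J = \<alpha> * partial d F J + \<beta> * partial d G J"
  shows "vector_field n a b c e H J = \<alpha> * vector_field n a b c e F J + \<beta> * vector_field n a b c e G J"
  by (simp add: vector_field_def assms sum_distrib_left sum.distrib algebra_simps)

context
  fixes n :: nat and a b :: real and c e :: "nat \<Rightarrow> real"
begin

lemma vector_field_const [simp]: "vector_field n a b c e (\<lambda>J. k) J = 0"
  by (simp add: vector_field_def partial_const)

lemma vector_field_add [simp]:
  "coordwise_differentiable F J \<Longrightarrow> coordwise_differentiable G J \<Longrightarrow>
     vector_field n a b c e (\<lambda>J. F J + G J) J = vector_field n a b c e F J + vector_field n a b c e G J"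
  using vector_field_linear[of "\<lambda>J. F J + G J" J 1 F 1 G]
  by (simp add: coordwise_differentiable_def partial_add)

lemma vector_field_diff [simp]:
  "coordwise_differentiable F J \<Longrightarrow> coordwise_differentiable G J \<Longrightarrow>
     vector_field n a b c e (\<lambda>J. F J - G J) J = vector_field n a b c e F J - vector_field n a b c e G J"
  using vector_field_linear[of "\<lambda>J. F J - G J" J 1 F "-1" G]
  by (simp add: coordwise_differentiable_def partial_diff)

lemma vector_field_mult [simp]:
  "coordwise_differentiable F J \<Longrightarrow> coordwise_differentiable G J \<Longrightarrow>
     vector_field n a b c e (\<lambda>J. F J * G J) J
       = vector_field n a b c e F J * G J + F J * vector_field n a b c e G J"
  using vector_field_linear[of "\<lambda>J. F J * G J" J "G J" F "F J" G]
  by (simp add: coordwise_differentiable_def partial_mult algebra_simps)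

lemma vector_field_divide [simp]:
  "coordwise_differentiable F J \<Longrightarrow> coordwise_differentiable G J \<Longrightarrow> G J \<noteq> 0 \<Longrightarrow>
     vector_field n a b c e (\<lambda>J. F J / G J) J
       = (vector_field n a b c e F J * G J - F J * vector_field n a b c e G J) / (G J)\<^sup>2"
  using vector_field_linear[of "\<lambda>J. F J / G J" J "1 / G J" F "- F J / (G J)\<^sup>2" G]
  by (simp add: coordwise_differentiable_def partial_divide field_simps power2_eq_square)

lemma vector_field_sum [simp]:
  "finite K \<Longrightarrow> \<forall>i\<in>K. coordwise_differentiable (F i) J \<Longrightarrow>
     vector_field n a b c e (\<lambda>J. \<Sum>i\<in>K. F i J) J = (\<Sum>i\<in>K. vector_field n a b c e (F i) J)"
  unfolding vector_field_def coordwise_differentiable_def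
  by (simp add: partial_sum sum_distrib_left sum.distrib) (subst (1 2) sum.swap, simp)

lemma vector_field_jet_projections [simp]:
  "vector_field n a b c e jet_x J = a"
  "vector_field n a b c e jet_t J = b"
  "k \<in> {1..n} \<Longrightarrow> vector_field n a b c e (jet_y k) J = c k"
  "k \<in> {1..n} \<Longrightarrow> vector_field n a b c e (jet_p k) J = e k"
  by (simp_all add: vector_field_def)

end

definition jet_domain :: "nat \<Rightarrow> jet \<Rightarrow> bool" where
  "jet_domain n J \<longleftrightarrow> jet_t J \<noteq> 0 \<and> (\<forall>k\<in>{1..n}. jet_y k J \<noteq> 0)"

lemma eventually_jet_domain_update:
  assumes "jet_domain n J"
  shows "\<forall>\<^sub>F s in nhds (jet_coord d J). jet_domain n (jet_update d J s)"
proof -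
  obtain x t y p where J: "J = (x, t, y, p)" by (cases J)
  have t: "t \<noteq> 0" and y: "\<forall>k\<in>{1..n}. y k \<noteq> 0"
    using assms by (auto simp: J jet_domain_def)
  show ?thesis
  proof (cases d)
    case DT
    show ?thesis
      using t1_space_nhds[OF t] y by (auto simp: J DT jet_domain_def elim!: eventually_mono)
  next
    case (DY k)
    show ?thesis
    proof (cases "k \<in> {1..n}")
      case True
      with y have "y k \<noteq> 0" by blast
      from t1_space_nhds[OF this] show ?thesis
        using t y by (auto simp: J DY jet_domain_def elim!: eventually_mono)
    qed (use t y in \<open>auto simp: J DY jet_domain_def\<close>)
  qed (use t y in \<open>auto simp: J jet_domain_def\<close>)
qed

lemma vector_field_cong_jet_domain:
  assumes "jet_domain n J" "\<And>J'. jet_domain n J' \<Longrightarrow> F J' = G J'"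
  shows "vector_field n a b c e F J = vector_field n a b c e G J"
proof -
  have "partial d F J = partial d G J" for d
    unfolding partial_def
    by (rule deriv_cong_ev[OF eventually_mono[OF eventually_jet_domain_update[OF assms(1)]] refl])
      (rule assms(2))
  then show ?thesis by (simp add: vector_field_def)
qed

lemma u_fun_eq: "u_fun n = (\<lambda>J. jet_x J / (6 * jet_t J) + (\<Sum>k = 1..n. jet_y k J) / (3 * jet_t J))"
  by (rule ext) (auto simp: u_fun_def)

lemma ux_fun_eq: "ux_fun n = (\<lambda>J. 1 / (6 * jet_t J) + (\<Sum>k = 1..n. jet_p k J) / (3 * jet_t J))"
  by (rule ext) (auto simp: ux_fun_def)

lemma rhsA_eq:
  "rhsA n lam alpha j = (\<lambda>J. (jet_p j J * jet_p j J - alpha j * alpha j) / (2 * jet_y j J)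
                              + 2 * (u_fun n J - lam j) * jet_y j J)"
  by (rule ext) (auto simp: rhsA_def power2_eq_square)

lemma rhsB_eq:
  "rhsB n lam j = (\<lambda>J. 2 * ux_fun n J * jet_y j J - 2 * (u_fun n J + 2 * lam j) * jet_p j J)"
  by (rule ext) (auto simp: rhsB_def)

definition uxx_fun :: "nat \<Rightarrow> (nat \<Rightarrow> real) \<Rightarrow> (nat \<Rightarrow> real) \<Rightarrow> jet \<Rightarrow> real" where
  "uxx_fun n lam alpha J = (\<Sum>k = 1..n. rhsA n lam alpha k J) / (3 * jet_t J)"

(* The x-derivative of (B) by virtue of (A): the two terms +-2 u_x y_{j,x} cancel. *)

definition rhsB_x :: "nat \<Rightarrow> (nat \<Rightarrow> real) \<Rightarrow> (nat \<Rightarrow> real) \<Rightarrow> nat \<Rightarrow> jet \<Rightarrow> real" where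
  "rhsB_x n lam alpha j J =
     2 * uxx_fun n lam alpha J * jet_y j J - 2 * (u_fun n J + 2 * lam j) * rhsA n lam alpha j J"

lemma coordwise_differentiable_u_fun [simp]: "jet_t J \<noteq> 0 \<Longrightarrow> coordwise_differentiable (u_fun n) J"
  by (simp add: u_fun_eq)

lemma coordwise_differentiable_ux_fun [simp]: "jet_t J \<noteq> 0 \<Longrightarrow> coordwise_differentiable (ux_fun n) J"
  by (simp add: ux_fun_eq)

lemma coordwise_differentiable_rhsA [simp]:
  "jet_t J \<noteq> 0 \<Longrightarrow> jet_y j J \<noteq> 0 \<Longrightarrow> coordwise_differentiable (rhsA n lam alpha j) J"
  by (simp add: rhsA_eq)

lemma coordwise_differentiable_uxx_fun [simp]:
  "jet_domain n J \<Longrightarrow> coordwise_differentiable (uxx_fun n lam alpha) J"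
  by (simp add: uxx_fun_def[abs_def] jet_domain_def)

context
  fixes n :: nat and a b :: real and c e :: "nat \<Rightarrow> real"
begin

lemma vector_field_u_fun:
  "t \<noteq> 0 \<Longrightarrow> vector_field n a b c e (u_fun n) (x, t, y, p)
     = a / (6 * t) - b * u_fun n (x, t, y, p) / t + (\<Sum>k = 1..n. c k) / (3 * t)"
  by (simp add: u_fun_eq) (simp add: field_simps power2_eq_square)

lemma vector_field_ux_fun:
  "t \<noteq> 0 \<Longrightarrow> vector_field n a b c e (ux_fun n) (x, t, y, p)
     = - b * ux_fun n (x, t, y, p) / t + (\<Sum>k = 1..n. e k) / (3 * t)"
  by (simp add: ux_fun_eq) (simp add: field_simps power2_eq_square)

lemma vector_field_rhsA:
  "t \<noteq> 0 \<Longrightarrow> y j \<noteq> 0 \<Longrightarrow> j \<in> {1..n} \<Longrightarrow> vector_field n a b c e (rhsA n lam alpha j) (x, t, y, p)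
     = p j / y j * e j + (2 * (u_fun n (x, t, y, p) - lam j) - ((p j)\<^sup>2 - (alpha j)\<^sup>2) / (2 * (y j)\<^sup>2)) * c j
       + 2 * y j * vector_field n a b c e (u_fun n) (x, t, y, p)"
  by (simp add: rhsA_eq) (simp add: field_simps power2_eq_square)

lemma vector_field_rhsB:
  "t \<noteq> 0 \<Longrightarrow> j \<in> {1..n} \<Longrightarrow> vector_field n a b c e (rhsB n lam j) (x, t, y, p)
     = 2 * vector_field n a b c e (ux_fun n) (x, t, y, p) * y j + 2 * ux_fun n (x, t, y, p) * c j
       - 2 * vector_field n a b c e (u_fun n) (x, t, y, p) * p j - 2 * (u_fun n (x, t, y, p) + 2 * lam j) * e j"
  by (simp add: rhsB_eq)

lemma vector_field_uxx_fun:
  "jet_domain n (x, t, y, p) \<Longrightarrow> vector_field n a b c e (uxx_fun n lam alpha) (x, t, y, p)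
     = (\<Sum>k = 1..n. vector_field n a b c e (rhsA n lam alpha k) (x, t, y, p)) / (3 * t)
       - b * uxx_fun n lam alpha (x, t, y, p) / t"
  by (simp add: uxx_fun_def[abs_def] jet_domain_def) (simp add: field_simps power2_eq_square)

lemma vector_field_rhsB_x:
  "jet_domain n (x, t, y, p) \<Longrightarrow> j \<in> {1..n} \<Longrightarrow>
     vector_field n a b c e (rhsB_x n lam alpha j) (x, t, y, p)
     = 2 * vector_field n a b c e (uxx_fun n lam alpha) (x, t, y, p) * y j
       + 2 * uxx_fun n lam alpha (x, t, y, p) * c j
       - 2 * vector_field n a b c e (u_fun n) (x, t, y, p) * rhsA n lam alpha j (x, t, y, p)
       - 2 * (u_fun n (x, t, y, p) + 2 * lam j) * vector_field n a b c e (rhsA n lam alpha j) (x, t, y, p)"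
  by (simp add: rhsB_x_def[abs_def]) (simp add: jet_domain_def algebra_simps)

end

lemma Dx_eq_vector_field:
  "Dx n lam alpha F J = vector_field n 1 0 (\<lambda>k. jet_p k J) (\<lambda>k. rhsA n lam alpha k J) F J"
  by (cases J) (simp add: Dx_def vector_field_def pd_x_def pd_y_def pd_p_def partial_def)

lemma Dt_eq_vector_field:
  "Dt n lam alpha F J
     = vector_field n 0 1 (\<lambda>k. rhsB n lam k J) (\<lambda>k. Dx n lam alpha (rhsB n lam k) J) F J"
  by (cases J) (simp add: Dt_def vector_field_def pd_t_def pd_y_def pd_p_def partial_def)

lemma Dx_u_fun: "jet_domain n J \<Longrightarrow> Dx n lam alpha (u_fun n) J = ux_fun n J"
  by (cases J) (simp add: Dx_eq_vector_field vector_field_u_fun ux_fun_def jet_domain_def)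

lemma Dx_ux_fun: "jet_domain n J \<Longrightarrow> Dx n lam alpha (ux_fun n) J = uxx_fun n lam alpha J"
  by (cases J) (simp add: Dx_eq_vector_field vector_field_ux_fun uxx_fun_def jet_domain_def)

lemma Dx_rhsA:
  assumes "jet_domain n (x, t, y, p)" "j \<in> {1..n}"
  shows "Dx n lam alpha (rhsA n lam alpha j) (x, t, y, p)
           = 4 * (u_fun n (x, t, y, p) - lam j) * p j + 2 * y j * ux_fun n (x, t, y, p)"
  using assms Dx_u_fun[OF assms(1)]
  by (simp add: Dx_eq_vector_field vector_field_rhsA jet_domain_def)
    (simp add: rhsA_def field_simps power2_eq_square)

lemma Dx_rhsB: "jet_domain n J \<Longrightarrow> j \<in> {1..n} \<Longrightarrow> Dx n lam alpha (rhsB n lam j) J = rhsB_x n lam alpha j J"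
  using Dx_u_fun[of n J lam alpha] Dx_ux_fun[of n J lam alpha]
  by (cases J) (simp add: Dx_eq_vector_field vector_field_rhsB rhsB_x_def jet_domain_def algebra_simps)

lemma Dx_Dx_u_fun:
  assumes "jet_domain n J"
  shows "Dx n lam alpha (Dx n lam alpha (u_fun n)) J = uxx_fun n lam alpha J"
proof -
  have "Dx n lam alpha (Dx n lam alpha (u_fun n)) J = Dx n lam alpha (ux_fun n) J"
    unfolding Dx_eq_vector_field[of n lam alpha _ J]
    by (rule vector_field_cong_jet_domain[OF assms Dx_u_fun])
  with Dx_ux_fun[OF assms] show ?thesis by simp
qed

lemma Dx_Dx_Dx_u_fun:
  assumes "jet_domain n J"
  shows "Dx n lam alpha (Dx n lam alpha (Dx n lam alpha (u_fun n))) J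
           = Dx n lam alpha (uxx_fun n lam alpha) J"
  unfolding Dx_eq_vector_field[of n lam alpha _ J]
  by (rule vector_field_cong_jet_domain[OF assms Dx_Dx_u_fun])

lemma Dx_uxx_fun:
  assumes "jet_domain n (x, t, y, p)"
  shows "Dx n lam alpha (uxx_fun n lam alpha) (x, t, y, p)
           = (\<Sum>k = 1..n. 4 * (u_fun n (x, t, y, p) - lam k) * p k + 2 * y k * ux_fun n (x, t, y, p))
             / (3 * t)"
proof -
  have "Dx n lam alpha (uxx_fun n lam alpha) (x, t, y, p)
          = (\<Sum>k = 1..n. Dx n lam alpha (rhsA n lam alpha k) (x, t, y, p)) / (3 * t)"
    using assms by (simp add: Dx_eq_vector_field vector_field_uxx_fun)
  then show ?thesis
    using assms by (simp add: Dx_rhsA)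
qed

lemma Dx_Dx_rhsB:
  assumes "jet_domain n (x, t, y, p)" "j \<in> {1..n}"
  shows "Dx n lam alpha (Dx n lam alpha (rhsB n lam j)) (x, t, y, p)
           = 2 * Dx n lam alpha (uxx_fun n lam alpha) (x, t, y, p) * y j
             + 2 * uxx_fun n lam alpha (x, t, y, p) * p j
             - 2 * ux_fun n (x, t, y, p) * rhsA n lam alpha j (x, t, y, p)
             - 2 * (u_fun n (x, t, y, p) + 2 * lam j)
                 * (4 * (u_fun n (x, t, y, p) - lam j) * p j + 2 * y j * ux_fun n (x, t, y, p))"
proof -
  have "Dx n lam alpha (Dx n lam alpha (rhsB n lam j)) (x, t, y, p)
          = Dx n lam alpha (rhsB_x n lam alpha j) (x, t, y, p)"
    unfolding Dx_eq_vector_field[of n lam alpha _ "(x, t, y, p)"]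
    by (rule vector_field_cong_jet_domain[OF assms(1) Dx_rhsB[OF _ assms(2)]])
  also have "\<dots> = 2 * Dx n lam alpha (uxx_fun n lam alpha) (x, t, y, p) * y j
             + 2 * uxx_fun n lam alpha (x, t, y, p) * p j
             - 2 * Dx n lam alpha (u_fun n) (x, t, y, p) * rhsA n lam alpha j (x, t, y, p)
             - 2 * (u_fun n (x, t, y, p) + 2 * lam j) * Dx n lam alpha (rhsA n lam alpha j) (x, t, y, p)"
    using assms by (simp add: Dx_eq_vector_field vector_field_rhsB_x)
  finally show ?thesis
    using assms by (simp add: Dx_u_fun Dx_rhsA)
qed

lemma Dt_u_fun:
  "t \<noteq> 0 \<Longrightarrow> Dt n lam alpha (u_fun n) (x, t, y, p)
     = - u_fun n (x, t, y, p) / t + (\<Sum>k = 1..n. rhsB n lam k (x, t, y, p)) / (3 * t)"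
  by (simp add: Dt_eq_vector_field vector_field_u_fun)

lemma Dt_rhsA:
  assumes "jet_domain n (x, t, y, p)" "j \<in> {1..n}"
  shows "Dt n lam alpha (rhsA n lam alpha j) (x, t, y, p)
           = p j / y j * rhsB_x n lam alpha j (x, t, y, p)
             + (2 * (u_fun n (x, t, y, p) - lam j) - ((p j)\<^sup>2 - (alpha j)\<^sup>2) / (2 * (y j)\<^sup>2))
                 * rhsB n lam j (x, t, y, p)
             + 2 * y j * Dt n lam alpha (u_fun n) (x, t, y, p)"
  using assms by (simp add: Dt_eq_vector_field vector_field_rhsA Dx_rhsB jet_domain_def)

lemma kdv_by_virtue:
  assumes "jet_domain n (x, t, y, p)"
  shows "Dt n lam alpha (u_fun n) (x, t, y, p)
           = Dx n lam alpha (Dx n lam alpha (Dx n lam alpha (u_fun n))) (x, t, y, p)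
             - 6 * u_fun n (x, t, y, p) * Dx n lam alpha (u_fun n) (x, t, y, p)"
proof -
  define u ux where "u = u_fun n (x, t, y, p)" and "ux = ux_fun n (x, t, y, p)"
  have t: "t \<noteq> 0" using assms by (simp add: jet_domain_def)
  have "(\<Sum>k = 1..n. rhsB n lam k (x, t, y, p))
          = (\<Sum>k = 1..n. (4 * (u - lam k) * p k + 2 * y k * ux) - 6 * u * p k)"
    by (rule sum.cong) (simp_all add: rhsB_def u_def ux_def algebra_simps)
  also have "\<dots> = (\<Sum>k = 1..n. 4 * (u - lam k) * p k + 2 * y k * ux) - 6 * u * (\<Sum>k = 1..n. p k)"
    by (simp add: sum_subtractf sum_distrib_left)
  finally have "Dt n lam alpha (u_fun n) (x, t, y, p)
               = Dx n lam alpha (uxx_fun n lam alpha) (x, t, y, p) - u / t - 6 * u * (\<Sum>k = 1..n. p k) / (3 * t)"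
    using assms t by (simp add: Dt_u_fun Dx_uxx_fun u_def ux_def diff_divide_distrib)
  also have "\<dots> = Dx n lam alpha (uxx_fun n lam alpha) (x, t, y, p) - 6 * u * ux"
    using t by (simp add: ux_def ux_fun_def field_simps)
  finally show ?thesis
    using assms by (simp add: Dx_Dx_Dx_u_fun Dx_u_fun u_def ux_def)
qed

lemma compatibility_by_virtue:
  assumes "jet_domain n (x, t, y, p)" "j \<in> {1..n}"
  shows "Dt n lam alpha (rhsA n lam alpha j) (x, t, y, p)
           = Dx n lam alpha (Dx n lam alpha (rhsB n lam j)) (x, t, y, p)"
proof -
  define u ux uxx uxxx
    where "u = u_fun n (x, t, y, p)" and "ux = ux_fun n (x, t, y, p)"
      and "uxx = uxx_fun n lam alpha (x, t, y, p)" and "uxxx = Dx n lam alpha (uxx_fun n lam alpha) (x, t, y, p)"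
  have yj: "y j \<noteq> 0" using assms by (simp add: jet_domain_def)
  have Dt_u: "Dt n lam alpha (u_fun n) (x, t, y, p) = uxxx - 6 * u * ux"
    using kdv_by_virtue[OF assms(1)] assms(1)
    by (simp add: Dx_Dx_Dx_u_fun Dx_u_fun u_def ux_def uxxx_def)
  have A: "rhsA n lam alpha j (x, t, y, p) = ((p j)\<^sup>2 - (alpha j)\<^sup>2) / (2 * y j) + 2 * (u - lam j) * y j"
    by (simp add: rhsA_def u_def)
  have B: "rhsB n lam j (x, t, y, p) = 2 * ux * y j - 2 * (u + 2 * lam j) * p j"
    by (simp add: rhsB_def u_def ux_def)
  have "Dt n lam alpha (rhsA n lam alpha j) (x, t, y, p)
          = p j / y j * (2 * uxx * y j - 2 * (u + 2 * lam j) * rhsA n lam alpha j (x, t, y, p))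
            + (2 * (u - lam j) - ((p j)\<^sup>2 - (alpha j)\<^sup>2) / (2 * (y j)\<^sup>2)) * rhsB n lam j (x, t, y, p)
            + 2 * y j * (uxxx - 6 * u * ux)"
    using Dt_rhsA[OF assms] by (simp add: Dt_u rhsB_x_def u_def uxx_def)
  also have "\<dots> = 2 * uxxx * y j + 2 * uxx * p j - 2 * ux * rhsA n lam alpha j (x, t, y, p)
                   - 2 * (u + 2 * lam j) * (4 * (u - lam j) * p j + 2 * y j * ux)"
    unfolding A B using yj by (simp add: field_simps power2_eq_square)
  also have "\<dots> = Dx n lam alpha (Dx n lam alpha (rhsB n lam j)) (x, t, y, p)"
    using Dx_Dx_rhsB[OF assms] by (simp add: u_def ux_def uxx_def uxxx_def)
  finally show ?thesis .
qed

theorem proposition1: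
  fixes n :: nat and lam alpha :: "nat \<Rightarrow> real"
  assumes "n \<ge> 1"
    and "inj_on lam {1..n}"
  shows "\<forall>x t y p. t \<noteq> 0 \<and> (\<forall>k\<in>{1..n}. y k \<noteq> 0) \<longrightarrow>
           (\<forall>j\<in>{1..n}.
              Dt n lam alpha (rhsA n lam alpha j) (x, t, y, p)
                = Dx n lam alpha (Dx n lam alpha (rhsB n lam j)) (x, t, y, p))
         \<and> Dt n lam alpha (u_fun n) (x, t, y, p)
             = Dx n lam alpha (Dx n lam alpha (Dx n lam alpha (u_fun n))) (x, t, y, p)
               - 6 * u_fun n (x, t, y, p) * Dx n lam alpha (u_fun n) (x, t, y, p)"
  using compatibility_by_virtue kdv_by_virtue by (simp add: jet_domain_def)

end
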